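(* Let $p$ be a prime with $p\equiv 1\pmod 4$, and let $$D_p(2,2)=\det\left[(i^2+2ij+2j^2)^{p-2}\right]_{1\le i,j\le p-1}.$$ Then $$\left(\frac{D_p(2,2)}{p}\right)=\begin{cases}1 & \text{if } p\equiv 1\pmod 8,\\ 0 & \text{if } p\equiv 5\pmod 8.\end{cases}$$
   Context: $\left(\frac{\cdot}{p}\right)$ denotes the Legendre symbol modulo $p$. The determinant is of the $(p-1)\times(p-1)$ integer matrix whose $(i,j)$ entry is $(i^2+2ij+2j^2)^{p-2}$. *)

theory Defs
  imports "HOL-Number_Theory.Number_Theory" "Jordan_Normal_Form.Determinant"
begin

text \<open>The (p-1)x(p-1) integer matrix with (i,j) entry (i^2+2ij+2j^2)^(p-2), 1 <= i,j <= p-1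
  (stored 0-based: entry (i,j) corresponds to indices i+1, j+1).\<close>
definition Dmat :: "nat \<Rightarrow> int mat" where
  "Dmat p = mat (p - 1) (p - 1)
     (\<lambda>(i, j). (int (i+1)^2 + 2 * int (i+1) * int (j+1) + 2 * int (j+1)^2) ^ (p - 2))"

definition D22 :: "nat \<Rightarrow> int" where
  "D22 p = det (Dmat p)"

end

theory Submission
  imports Defs
begin

text \<open>
  Multiplying the matrix on the right by the Vandermonde matrix (x^k) and substituting y = x t in
  row x gives D \<equiv> \<mu>_1 \<cdots> \<mu>_(p-1) (mod p), where \<mu>_k = \<Sigma>_t t^k (1 + 2t + 2t^2)^(p-2); the remaining
  diagonal factors multiply to a power of (p - 1)! \<equiv> -1. As p \<equiv> 1 (mod 4) there is i with
  i^2 \<equiv> -1, and 1 + 2t + 2t^2 \<equiv> 2 (t - \<rho>)(t - \<sigma>) with \<rho>, \<sigma> = (-1 \<plusminus> i)/2. Reading t^(p-2) as 1/t,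
  partial fractions reduce \<mu>_k to sums \<Sigma>_t t^k (t - a)^(p-2) \<equiv> -k a^(k-1), so that
  \<mu>_k \<equiv> \<rho>^(k-1) B_k / 2 with B_k linear in k on each residue class mod 4. If p \<equiv> 5 (mod 8), then
  B_k = i p \<equiv> 0 for k = (p + 1)/2. If p \<equiv> 1 (mod 8), the product over four consecutive k is a
  square times (4q + 2)(4q + 3)(8q + 5), and reflecting q in the remaining products gives
  \<Pi> (4q + 3) \<equiv> \<Pi> (4q + 2) and \<Pi> (8q + 5) \<equiv> (-1)^m (\<Pi> (8q + 4))^2 \<equiv> (i^m \<Pi> (8q + 4))^2,
  so the whole product is a nonzero square.
\<close>

lemma fermat_theorem_int:
  assumes "prime p" and "\<not> int p dvd x"
  shows "[x ^ (p - 1) = 1] (mod int p)"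
proof -
  define y where "y = nat (x mod int p)"
  have yx: "int y = x mod int p"
    unfolding y_def using prime_gt_0_nat[OF assms(1)] by simp
  have "\<not> p dvd y"
  proof
    assume "p dvd y"
    then have "int p dvd x mod int p"
      using yx by (metis of_nat_dvd_iff)
    with assms(2) show False
      by (simp add: dvd_mod_iff)
  qed
  then have "[y ^ (p - 1) = 1] (mod p)"
    using fermat_theorem assms(1) by blast
  then have "[int y ^ (p - 1) = 1] (mod int p)"
    by (metis cong_int_iff of_nat_1 of_nat_power)
  moreover have "[x = int y] (mod int p)"
    using yx by (simp add: cong_def)
  ultimately show ?thesis
    using cong_pow cong_trans by blast
qed

lemma fermat_inverse_int:
  assumes "prime p" and "\<not> int p dvd x"
  shows "[x * x ^ (p - 2) = 1] (mod int p)"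
proof -
  have "p - 1 = Suc (p - 2)"
    using prime_ge_2_nat[OF assms(1)] by simp
  then show ?thesis
    using fermat_theorem_int[OF assms] by simp
qed

lemma not_dvd_if_cong_inverse:
  assumes "prime p" and "[a * b = 1] (mod int p)"
  shows "\<not> int p dvd a"
proof
  assume "int p dvd a"
  then have "[a * b = 0] (mod int p)"
    by (simp add: cong_0_iff)
  with assms(2) have "int p dvd 1"
    by (metis cong_0_iff cong_sym cong_trans)
  with assms(1) show False
    by simp
qed

lemma bij_betw_mult_mod_prime:
  assumes "prime p" and "\<not> int p dvd a"
  shows "bij_betw (\<lambda>t. (a * t) mod int p) {1..int p - 1} {1..int p - 1}"
proof -
  let ?S = "{1..int p - 1}" and ?f = "\<lambda>t. (a * t) mod int p"
  have coprime: "coprime a (int p)"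
    using assms prime_imp_coprime[of "int p" a] by (simp add: coprime_commute)
  have "inj_on ?f ?S"
  proof (rule inj_onI)
    fix x y assume "x \<in> ?S" "y \<in> ?S" "?f x = ?f y"
    then have "[x = y] (mod int p)"
      using cong_mult_lcancel[OF coprime] by (simp add: cong_def)
    with \<open>x \<in> ?S\<close> \<open>y \<in> ?S\<close> show "x = y"
      by (simp add: cong_def)
  qed
  moreover have "?f ` ?S \<subseteq> ?S"
  proof
    fix z assume "z \<in> ?f ` ?S"
    then obtain t where t: "t \<in> ?S" "z = (a * t) mod int p" by blast
    have "\<not> int p dvd a * t"
      using assms t(1) zdvd_not_zless[of t "int p"]
      by (simp add: prime_dvd_mult_iff)
    then have "z \<noteq> 0"
      using t(2) by (simp add: dvd_eq_mod_eq_0)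
    moreover have "0 \<le> z" "z < int p"
      using t(2) prime_gt_0_nat[OF assms(1)] by auto
    ultimately show "z \<in> ?S"
      by auto
  qed
  ultimately show ?thesis
    by (simp add: bij_betw_def card_image card_subset_eq)
qed

lemma sum_reindex_mult_mod_prime:
  assumes "prime p" and "\<not> int p dvd a"
  shows "(\<Sum>t\<in>{1..int p - 1}. f t) = (\<Sum>t\<in>{1..int p - 1}. f ((a * t) mod int p))"
  using sum.reindex_bij_betw[OF bij_betw_mult_mod_prime[OF assms], of f] by simp

lemma exists_power_not_cong_one_mod_prime:
  assumes "prime p" and "\<not> (p - 1) dvd m"
  obtains g where "\<not> int p dvd g" and "\<not> int p dvd g ^ m - 1"
proof -
  obtain g where g: "residue_primroot p g"
    using prime_primitive_root_exists[OF prime_gt_1_nat[OF assms(1)] assms(1)] by blast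
  have "ord p g = p - 1"
    using g assms(1) by (simp add: residue_primroot_def totient_prime)
  then have "\<not> [g ^ m = 1] (mod p)"
    using assms(2) ord_divides by metis
  then have "\<not> [int g ^ m = 1] (mod int p)"
    using cong_int_iff by (metis of_nat_1 of_nat_power)
  moreover have "\<not> int p dvd int g"
  proof
    assume "int p dvd int g"
    then have "\<not> coprime p g"
      using prime_gt_1_nat[OF assms(1)] by auto
    with g show False
      by (simp add: residue_primroot_def)
  qed
  ultimately show ?thesis
    using that[of "int g"] by (simp add: cong_iff_dvd_diff)
qed

lemma power_sum_mod_prime:
  assumes "prime p"
  shows "[(\<Sum>t\<in>{1..int p - 1}. t ^ m) = (if (p - 1) dvd m then -1 else 0)] (mod int p)"
proof (cases "(p - 1) dvd m")
  case True
  then obtain c where c: "m = (p - 1) * c" by blast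
  have "[(\<Sum>t\<in>{1..int p - 1}. t ^ m) = (\<Sum>t\<in>{1..int p - 1}. 1)] (mod int p)"
  proof (rule cong_sum)
    fix t assume "t \<in> {1..int p - 1}"
    then have "[t ^ (p - 1) = 1] (mod int p)"
      using assms fermat_theorem_int zdvd_not_zless[of t "int p"] by simp
    then show "[t ^ m = 1] (mod int p)"
      unfolding c power_mult by (metis cong_pow power_one)
  qed
  moreover have "(\<Sum>t\<in>{1..int p - 1}. (1::int)) = int p - 1"
    using prime_gt_0_nat[OF assms] by simp
  moreover have "[int p - 1 = -1] (mod int p)"
    by (simp add: cong_iff_dvd_diff)
  ultimately show ?thesis
    using True cong_trans by auto
next
  case False
  obtain g where gnd: "\<not> int p dvd g" and ng: "\<not> int p dvd g ^ m - 1"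
    using exists_power_not_cong_one_mod_prime[OF assms False] .
  define S where "S = (\<Sum>t\<in>{1..int p - 1}. t ^ m)"
  have "S = (\<Sum>t\<in>{1..int p - 1}. ((g * t) mod int p) ^ m)"
    unfolding S_def by (rule sum_reindex_mult_mod_prime[OF assms gnd])
  also have "[\<dots> = (\<Sum>t\<in>{1..int p - 1}. (g * t) ^ m)] (mod int p)"
    by (rule cong_sum, rule cong_pow) (simp add: cong_def)
  also have "(\<Sum>t\<in>{1..int p - 1}. (g * t) ^ m) = g ^ m * S"
    unfolding S_def by (simp add: power_mult_distrib sum_distrib_left)
  finally have "int p dvd (g ^ m - 1) * S"
    by (simp add: cong_iff_dvd_diff left_diff_distrib dvd_diff_commute)
  with ng assms have "int p dvd S"
    by (simp add: prime_dvd_mult_iff)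
  then show ?thesis
    using False unfolding S_def by (simp add: cong_0_iff)
qed

lemma sum_power_mult_inverse_diff_scale:
  assumes "prime p" and "\<not> int p dvd a"
  shows "[(\<Sum>t\<in>{1..int p - 1}. t ^ k * (t - a) ^ (p - 2)) =
          a ^ (k + (p - 2)) * (\<Sum>s\<in>{1..int p - 1}. s ^ k * (s - 1) ^ (p - 2))] (mod int p)"
proof -
  have "(\<Sum>t\<in>{1..int p - 1}. t ^ k * (t - a) ^ (p - 2)) =
        (\<Sum>s\<in>{1..int p - 1}. ((a * s) mod int p) ^ k * ((a * s) mod int p - a) ^ (p - 2))"
    by (rule sum_reindex_mult_mod_prime[OF assms])
  also have "[\<dots> = (\<Sum>s\<in>{1..int p - 1}. (a * s) ^ k * (a * (s - 1)) ^ (p - 2))] (mod int p)"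
    by (intro cong_sum cong_mult cong_pow cong_diff)
       (auto simp: cong_def right_diff_distrib mod_diff_left_eq)
  also have "(\<Sum>s\<in>{1..int p - 1}. (a * s) ^ k * (a * (s - 1)) ^ (p - 2)) =
      a ^ (k + (p - 2)) * (\<Sum>s\<in>{1..int p - 1}. s ^ k * (s - 1) ^ (p - 2))"
    by (simp add: sum_distrib_left power_mult_distrib power_add mult_ac)
  finally show ?thesis .
qed

lemma sum_power_indicator_cong:
  assumes "prime p" and "\<not> int p dvd a"
  shows "[(\<Sum>t\<in>{1..int p - 1}. t ^ k * (if int p dvd t - a then 1 else 0)) = a ^ k] (mod int p)"
proof -
  have "a mod int p \<noteq> 0"
    using assms(2) by (simp add: dvd_eq_mod_eq_0)
  moreover have "0 \<le> a mod int p" "a mod int p < int p"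
    using prime_gt_0_nat[OF assms(1)] by simp_all
  ultimately have a: "a mod int p \<in> {1..int p - 1}"
    by auto
  have "(\<Sum>t\<in>{1..int p - 1}. t ^ k * (if int p dvd t - a then 1 else 0)) =
        (\<Sum>t\<in>{1..int p - 1}. if t = a mod int p then t ^ k else 0)"
  proof (rule sum.cong)
    fix t assume "t \<in> {1..int p - 1}"
    then have "int p dvd t - a \<longleftrightarrow> t = a mod int p"
      by (auto simp: mod_eq_dvd_iff[symmetric])
    then show "t ^ k * (if int p dvd t - a then 1 else 0) = (if t = a mod int p then t ^ k else 0)"
      by simp
  qed simp
  also have "\<dots> = (a mod int p) ^ k"
    using a by (simp add: sum.delta')
  finally show ?thesis
    by (simp add: cong_def power_mod)
qed

lemma index_mult_mat_sum:
  assumes "A \<in> carrier_mat n m" "B \<in> carrier_mat m l" "x < n" "y < l"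
  shows "(A * B) $$ (x, y) = (\<Sum>j<m. A $$ (x, j) * B $$ (j, y))"
  using assms by (simp add: scalar_prod_def atLeast0LessThan)

lemma det_cong:
  fixes A B :: "'a :: unique_euclidean_ring mat"
  assumes "A \<in> carrier_mat n n" and "B \<in> carrier_mat n n"
    and "\<And>x y. x < n \<Longrightarrow> y < n \<Longrightarrow> [A $$ (x, y) = B $$ (x, y)] (mod m)"
  shows "[det A = det B] (mod m)"
  unfolding det_def'[OF assms(1)] det_def'[OF assms(2)]
proof (intro cong_sum cong_mult cong_refl cong_prod)
  fix q x assume "q \<in> {q. q permutes {0..<n}}" and "x \<in> {0..<n}"
  then show "[A $$ (x, q x) = B $$ (x, q x)] (mod m)"
    using assms(3) permutes_in_image[of q "{0..<n}" x] by auto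
qed

lemma det_mat_diag: "det (mat_diag n f) = (\<Prod>x<n. f x)"
proof -
  have "det (mat_diag n f) = prod_list (diag_mat (mat_diag n f))"
    by (rule det_upper_triangular[of _ n]) (auto simp: mat_diag_def)
  also have "\<dots> = (\<Prod>x<n. f x)"
    by (simp add: prod_list_diag_prod mat_diag_def atLeast0LessThan)
  finally show ?thesis .
qed

lemma prod_lessThan_mult_4:
  fixes f :: "nat \<Rightarrow> 'a :: comm_monoid_mult"
  shows "(\<Prod>k<4 * n. f (k + 1)) = (\<Prod>q<n. f (4 * q + 1) * f (4 * q + 2) * f (4 * q + 3) * f (4 * q + 4))"
proof -
  have "(\<Prod>k<4 * n. f (k + 1)) = (\<Prod>q<n. \<Prod>k\<in>{q * 4..<q * 4 + 4}. f (k + 1))"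
    using prod.nat_group[of "\<lambda>k. f (k + 1)" 4 n] by (simp add: mult.commute)
  also have "\<dots> = (\<Prod>q<n. f (4 * q + 1) * f (4 * q + 2) * f (4 * q + 3) * f (4 * q + 4))"
  proof (rule prod.cong)
    fix q :: nat
    have "{q * 4..<q * 4 + 4} = {4 * q, 4 * q + 1, 4 * q + 2, 4 * q + 3}"
      by auto
    then show "(\<Prod>k\<in>{q * 4..<q * 4 + 4}. f (k + 1)) =
               f (4 * q + 1) * f (4 * q + 2) * f (4 * q + 3) * f (4 * q + 4)"
      by (simp add: mult_ac numeral_eq_Suc)
  qed simp
  finally show ?thesis .
qed

lemma prod_4_mult_plus_3_cong:
  assumes "p = 4 * m + 1"
  shows "[(\<Prod>q<m. 4 * int q + 3) = (-1) ^ m * (\<Prod>q<m. 4 * int q + 2)] (mod int p)"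
proof -
  have "(\<Prod>q<m. 4 * int q + 3) = (\<Prod>q<m. 4 * int (m - Suc q) + 3)"
    by (rule prod.nat_diff_reindex[symmetric])
  also have "\<dots> = (\<Prod>q<m. int p - (4 * int q + 2))"
    using assms by (intro prod.cong) (auto simp: of_nat_diff)
  also have "[\<dots> = (\<Prod>q<m. - (4 * int q + 2))] (mod int p)"
    by (intro cong_prod) (simp add: cong_iff_dvd_diff)
  also have "(\<Prod>q<m. - (4 * int q + 2)) = (-1) ^ m * (\<Prod>q<m. 4 * int q + 2)"
    by (subst prod_uminus) simp
  finally show ?thesis .
qed

lemma prod_8_mult_plus_5_cong:
  assumes "p = 8 * m + 1"
  shows "[(\<Prod>q<2 * m. 8 * int q + 5) = (-1) ^ m * (\<Prod>q<m. 8 * int q + 4)\<^sup>2] (mod int p)"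
proof -
  have "(\<Prod>q<2 * m. 8 * int q + 5) = (\<Prod>q<m. 8 * int q + 5) * (\<Prod>q<m. 8 * int (q + m) + 5)"
    using prod.atLeastLessThan_concat[of 0 m "2 * m" "\<lambda>q. 8 * int q + 5"]
      prod.shift_bounds_nat_ivl[of "\<lambda>q. 8 * int q + 5" 0 m m]
    by (simp add: atLeast0LessThan mult_2)
  also have "(\<Prod>q<m. 8 * int q + 5) = (\<Prod>q<m. int p - (8 * int q + 4))"
    using assms by (subst prod.nat_diff_reindex[symmetric]) (auto intro: prod.cong simp: of_nat_diff)
  also have "(\<Prod>q<m. 8 * int (q + m) + 5) = (\<Prod>q<m. int p + (8 * int q + 4))"
    using assms by (intro prod.cong) auto
  also have "[(\<Prod>q<m. int p - (8 * int q + 4)) * (\<Prod>q<m. int p + (8 * int q + 4)) =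
              (\<Prod>q<m. - (8 * int q + 4)) * (\<Prod>q<m. 8 * int q + 4)] (mod int p)"
    by (intro cong_mult cong_prod) (simp_all add: cong_iff_dvd_diff)
  also have "(\<Prod>q<m. - (8 * int q + 4)) * (\<Prod>q<m. 8 * int q + 4) = (-1) ^ m * (\<Prod>q<m. 8 * int q + 4)\<^sup>2"
    by (subst prod_uminus) (simp add: power2_eq_square)
  finally show ?thesis .
qed

locale odd_prime =
  fixes p :: nat
  assumes prime: "prime p" and gt_2: "2 < p"

begin

lemma prime_int: "prime (int p)"
  using prime by simp

lemma odd: "odd p"
  using prime gt_2 prime_odd_nat by blast

lemma odd_pred_pred: "odd (p - 2)"
  using odd gt_2 by simp

lemma sum_power_pred_inverse:
  "[(\<Sum>s\<in>{1..int p - 1}. (s - 1) ^ (p - 2)) = 1] (mod int p)"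
proof -
  have "(\<Sum>s\<in>{1..int p - 1}. (s - 1) ^ (p - 2)) = (\<Sum>x\<in>{0..int p - 2}. x ^ (p - 2))"
    by (rule sum.reindex_bij_witness[of _ "\<lambda>x. x + 1" "\<lambda>s. s - 1"]) auto
  also have "\<dots> = (\<Sum>x\<in>{1..int p - 1}. x ^ (p - 2)) - (int p - 1) ^ (p - 2)"
  proof -
    have "{0..int p - 2} = insert 0 {1..int p - 2}" "{1..int p - 1} = insert (int p - 1) {1..int p - 2}"
      using gt_2 by auto
    then show ?thesis
      using gt_2 by simp
  qed
  also have "[\<dots> = 0 - (-1) ^ (p - 2)] (mod int p)"
  proof (rule cong_diff)
    have "\<not> (p - 1) dvd (p - 2)"
      using gt_2 by (intro nat_dvd_not_less) auto
    then show "[(\<Sum>x\<in>{1..int p - 1}. x ^ (p - 2)) = 0] (mod int p)"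
      using power_sum_mod_prime[OF prime, of "p - 2"] by simp
    show "[(int p - 1) ^ (p - 2) = (-1) ^ (p - 2)] (mod int p)"
      by (rule cong_pow) (simp add: cong_iff_dvd_diff)
  qed
  also have "(0::int) - (-1) ^ (p - 2) = 1"
    using odd gt_2 by (simp add: odd_pos)
  finally show ?thesis .
qed

lemma power_mult_power_pred_inverse_cong:
  assumes s: "s \<in> {1..int p - 1}"
  shows "[s ^ k * (s - 1) ^ (p - 2) = (\<Sum>j<k. s ^ j) - (if s = 1 then int k else 0) + (s - 1) ^ (p - 2)]
         (mod int p)"
proof -
  define P where "P = (\<Sum>j<k. s ^ j)"
  have "s ^ k * (s - 1) ^ (p - 2) = P * (s - 1) ^ (p - 1) + (s - 1) ^ (p - 2)"
  proof -
    have geometric: "s ^ k = (s - 1) * P + 1"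
      using power_diff_1_eq[of s k] unfolding P_def by simp
    have "(s - 1) ^ (p - 1) = (s - 1) * (s - 1) ^ (p - 2)"
      using gt_2 by (simp flip: power_Suc add: Suc_diff_Suc numeral_2_eq_2)
    then show ?thesis
      unfolding geometric by (simp add: distrib_right mult_ac)
  qed
  moreover have "[P * (s - 1) ^ (p - 1) = P - (if s = 1 then int k else 0)] (mod int p)"
  proof (cases "s = 1")
    case True
    then show ?thesis
      using gt_2 by (simp add: P_def power_0_left)
  next
    case False
    then have "[(s - 1) ^ (p - 1) = 1] (mod int p)"
      using s prime fermat_theorem_int zdvd_not_zless[of "s - 1" "int p"] by simp
    then have "[P * (s - 1) ^ (p - 1) = P * 1] (mod int p)"
      by (rule cong_scalar_left)
    with False show ?thesis
      by simp
  qed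
  ultimately show ?thesis
    unfolding P_def by (simp add: cong_add)
qed

lemma sum_power_mult_power_pred_inverse:
  assumes "1 \<le> k" and "k \<le> p - 1"
  shows "[(\<Sum>s\<in>{1..int p - 1}. s ^ k * (s - 1) ^ (p - 2)) = - int k] (mod int p)"
proof -
  have "[(\<Sum>s\<in>{1..int p - 1}. s ^ k * (s - 1) ^ (p - 2)) =
      (\<Sum>s\<in>{1..int p - 1}. (\<Sum>j<k. s ^ j) - (if s = 1 then int k else 0) + (s - 1) ^ (p - 2))] (mod int p)"
    by (intro cong_sum power_mult_power_pred_inverse_cong)
  also have "(\<Sum>s\<in>{1..int p - 1}. (\<Sum>j<k. s ^ j) - (if s = 1 then int k else 0) + (s - 1) ^ (p - 2))
     = (\<Sum>j<k. \<Sum>s\<in>{1..int p - 1}. s ^ j) - int k + (\<Sum>s\<in>{1..int p - 1}. (s - 1) ^ (p - 2))"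
    using gt_2 by (simp add: sum.distrib sum_subtractf sum.swap[of _ "{..<k}"])
  also have "[\<dots> = (\<Sum>j<k. if j = 0 then -1 else 0) - int k + 1] (mod int p)"
  proof (intro cong_add cong_diff cong_refl cong_sum sum_power_pred_inverse)
    fix j assume "j \<in> {..<k}"
    then have "(p - 1) dvd j \<longleftrightarrow> j = 0"
      using assms by (auto dest: dvd_imp_le)
    then show "[(\<Sum>s\<in>{1..int p - 1}. s ^ j) = (if j = 0 then -1 else 0)] (mod int p)"
      using power_sum_mod_prime[OF prime, of j] by simp
  qed
  also have "(\<Sum>j<k. if j = 0 then -1 else 0::int) - int k + 1 = - int k"
    using assms by simp
  finally show ?thesis .
qed

lemma sum_power_mult_inverse_diff_cong:
  assumes k: "1 \<le> k" "k \<le> p - 1" and a: "\<not> int p dvd a"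
  shows "[(\<Sum>t\<in>{1..int p - 1}. t ^ k * (t - a) ^ (p - 2)) = a ^ (k - 1) * - int k] (mod int p)"
proof -
  have "k + (p - 2) = (p - 1) + (k - 1)"
    using k gt_2 by simp
  then have "a ^ (k + (p - 2)) = a ^ (p - 1) * a ^ (k - 1)"
    by (simp only: power_add)
  also have "[\<dots> = 1 * a ^ (k - 1)] (mod int p)"
    by (intro cong_mult cong_refl fermat_theorem_int prime a)
  finally have "[a ^ (k + (p - 2)) = a ^ (k - 1)] (mod int p)"
    by simp
  then show ?thesis
    using sum_power_mult_inverse_diff_scale[OF prime a]
      cong_mult[OF _ sum_power_mult_power_pred_inverse[OF k]] cong_trans by blast
qed

lemma inverse_power_cong_zero: "[x = 0] (mod int p) \<Longrightarrow> [x ^ (p - 2) = 0] (mod int p)"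
  using cong_pow[of x 0 "int p" "p - 2"] gt_2 by (simp add: power_0_left)

lemma inverse_power_mult_cong_units:
  assumes d: "\<not> int p dvd d" and "\<not> int p dvd x" and "\<not> int p dvd y"
    and xy: "[x - y = d] (mod int p)"
  shows "[x ^ (p - 2) * y ^ (p - 2) = d ^ (p - 2) * (y ^ (p - 2) - x ^ (p - 2))] (mod int p)"
proof -
  define X Y D where "X = x ^ (p - 2)" and "Y = y ^ (p - 2)" and "D = d ^ (p - 2)"
  have dD: "[d * D = 1] (mod int p)"
    unfolding D_def by (rule fermat_inverse_int[OF prime d])
  have xX: "[x * X = 1] (mod int p)" and yY: "[y * Y = 1] (mod int p)"
    unfolding X_def Y_def using assms by (simp_all add: fermat_inverse_int[OF prime])
  have "X * Y = X * Y * 1"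
    by simp
  also have "[\<dots> = X * Y * (d * D)] (mod int p)"
    using dD by (intro cong_mult cong_refl) (rule cong_sym)
  also have "X * Y * (d * D) = D * (X * Y * d)"
    by (simp add: mult_ac)
  also have "[\<dots> = D * (X * Y * (x - y))] (mod int p)"
    using xy by (intro cong_mult cong_refl) (rule cong_sym)
  also have "D * (X * Y * (x - y)) = D * (Y * (x * X) - X * (y * Y))"
    by (simp add: algebra_simps)
  also have "[\<dots> = D * (Y * 1 - X * 1)] (mod int p)"
    by (intro cong_mult cong_diff cong_refl xX yY)
  finally show ?thesis
    unfolding X_def Y_def D_def by simp
qed

lemma inverse_power_mult_cong_zero:
  assumes "int p dvd x" and xy: "[x - y = d] (mod int p)"
  shows "[x ^ (p - 2) * y ^ (p - 2) = d ^ (p - 2) * (y ^ (p - 2) - x ^ (p - 2)) + (d ^ (p - 2))\<^sup>2]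
         (mod int p)"
proof -
  define X Y D where "X = x ^ (p - 2)" and "Y = y ^ (p - 2)" and "D = d ^ (p - 2)"
  have X0: "[X = 0] (mod int p)"
    unfolding X_def using assms(1) inverse_power_cong_zero[of x] by (simp add: cong_0_iff)
  have "[x - (x - y) = 0 - d] (mod int p)"
    using assms by (intro cong_diff) (simp_all add: cong_0_iff)
  then have "[Y = (- d) ^ (p - 2)] (mod int p)"
    unfolding Y_def by (simp add: cong_pow)
  then have Y: "[Y = - D] (mod int p)"
    unfolding D_def power_minus_odd[OF odd_pred_pred] .
  have "[X * Y = 0] (mod int p)"
    using cong_mult[OF X0 Y] by simp
  moreover have "[D * (Y - X) + D\<^sup>2 = D * (- D - 0) + D\<^sup>2] (mod int p)"
    using X0 Y by (intro cong_add cong_mult cong_diff cong_refl)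
  then have "[D * (Y - X) + D\<^sup>2 = 0] (mod int p)"
    by (simp add: power2_eq_square)
  ultimately show ?thesis
    unfolding X_def Y_def D_def by (metis cong_sym cong_trans)
qed

text \<open>Modulo p, x^(p-2) is the inverse of x, extended by 0 at 0. This is the partial fraction
  decomposition 1/(xy) = (1/y - 1/x)/d for x - y = d, corrected when x or y vanishes.\<close>

lemma inverse_power_mult_partial_fractions:
  assumes d: "\<not> int p dvd d" and xy: "[x - y = d] (mod int p)"
  shows "[x ^ (p - 2) * y ^ (p - 2) = d ^ (p - 2) * (y ^ (p - 2) - x ^ (p - 2))
            + (d ^ (p - 2))\<^sup>2 * ((if int p dvd x then 1 else 0) + (if int p dvd y then 1 else 0))]
         (mod int p)"
proof -
  have not_both: "\<not> (int p dvd x \<and> int p dvd y)"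
    using d cong_dvd_iff[OF xy] dvd_diff by blast
  consider "int p dvd x" | "int p dvd y" | "\<not> int p dvd x" "\<not> int p dvd y"
    by blast
  then show ?thesis
  proof cases
    case 1
    then show ?thesis
      using inverse_power_mult_cong_zero[OF 1 xy] not_both by simp
  next
    case 2
    have "[y - x = - d] (mod int p)"
      using xy by (metis cong_minus_minus_iff minus_diff_eq)
    then have "[y ^ (p - 2) * x ^ (p - 2) = (- d) ^ (p - 2) * (x ^ (p - 2) - y ^ (p - 2)) + ((- d) ^ (p - 2))\<^sup>2]
               (mod int p)"
      by (rule inverse_power_mult_cong_zero[OF 2])
    then show ?thesis
      using 2 not_both by (simp add: power_minus_odd[OF odd_pred_pred] algebra_simps)
  next
    case 3
    then show ?thesis
      using inverse_power_mult_cong_units[OF d _ _ xy] by simp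
  qed
qed

definition power_mat :: "int mat" where
  "power_mat = mat (p - 1) (p - 1) (\<lambda>(x, k). int (x + 1) ^ (k + 1))"

lemma power_mat_carrier: "power_mat \<in> carrier_mat (p - 1) (p - 1)"
  by (simp add: power_mat_def)

lemma sum_power_mult_power_orthogonality:
  assumes "a \<in> {1..int p - 1}" and "b \<in> {1..int p - 1}"
  shows "[(\<Sum>k<p - 1. a ^ (k + 1) * b ^ (p - 2 - k)) = (if a = b then -1 else 0)] (mod int p)"
proof (cases "a = b")
  case True
  have "a ^ (k + 1) * b ^ (p - 2 - k) = a ^ (p - 1)" if "k < p - 1" for k
  proof -
    have "k + 1 + (p - 2 - k) = p - 1"
      using that by simp
    then show ?thesis
      using True by (metis power_add)
  qed
  then have "(\<Sum>k<p - 1. a ^ (k + 1) * b ^ (p - 2 - k)) = (\<Sum>k<p - 1. a ^ (p - 1))"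
    by (intro sum.cong) auto
  also have "[\<dots> = (\<Sum>k<p - 1. 1)] (mod int p)"
    using assms(1) prime fermat_theorem_int zdvd_not_zless[of a "int p"]
    by (intro cong_sum) auto
  also have "(\<Sum>k<p - 1. 1) = int p - 1"
    using gt_2 by simp
  also have "[int p - 1 = -1] (mod int p)"
    by (simp add: cong_iff_dvd_diff)
  finally show ?thesis
    using True by simp
next
  case False
  define S where "S = (\<Sum>k<p - 1. b ^ (p - 1 - Suc k) * a ^ k)"
  have "\<not> int p dvd a - b"
    using assms False zdvd_not_zless[of "a - b" "int p"] zdvd_not_zless[of "b - a" "int p"]
    by (cases "a < b") (auto simp: dvd_diff_commute)
  moreover have "[(a - b) * S = 1 - 1] (mod int p)"
    unfolding S_def power_diff_sumr2[symmetric] using assms prime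
    by (intro cong_diff fermat_theorem_int zdvd_not_zless) auto
  ultimately have "int p dvd S"
    using prime_int by (simp add: cong_0_iff prime_dvd_mult_iff)
  moreover have "(\<Sum>k<p - 1. a ^ (k + 1) * b ^ (p - 2 - k)) = a * S"
    unfolding S_def sum_distrib_left by (intro sum.cong) (auto simp: Suc_diff_Suc numeral_2_eq_2)
  ultimately show ?thesis
    using False by (simp add: cong_0_iff)
qed

text \<open>power_mat is a Vandermonde matrix on the nonzero residues; by the orthogonality relation
  above, the matrix (y^(p-2-k)) inverts it up to sign modulo p.\<close>

lemma det_power_mat_not_dvd: "\<not> int p dvd det power_mat"
proof
  define E where "E = mat (p - 1) (p - 1) (\<lambda>(k, y). int (y + 1) ^ (p - 2 - k))"
  have E: "E \<in> carrier_mat (p - 1) (p - 1)"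
    by (simp add: E_def)
  have "[det (power_mat * E) = det (mat_diag (p - 1) (\<lambda>_. -1 :: int))] (mod int p)"
  proof (rule det_cong[of _ "p - 1"])
    fix x y assume xy: "x < p - 1" "y < p - 1"
    have "(power_mat * E) $$ (x, y) = (\<Sum>k<p - 1. power_mat $$ (x, k) * E $$ (k, y))"
      by (rule index_mult_mat_sum[OF power_mat_carrier E xy])
    also have "\<dots> = (\<Sum>k<p - 1. int (x + 1) ^ (k + 1) * int (y + 1) ^ (p - 2 - k))"
      using xy by (intro sum.cong) (auto simp: power_mat_def E_def)
    also have "[\<dots> = (if int (x + 1) = int (y + 1) then -1 else 0)] (mod int p)"
      using xy by (intro sum_power_mult_power_orthogonality) auto
    finally show "[(power_mat * E) $$ (x, y) = mat_diag (p - 1) (\<lambda>_. -1) $$ (x, y)] (mod int p)"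
      using xy by (simp add: mat_diag_def)
  qed (use power_mat_carrier E in auto)
  moreover have "det (mat_diag (p - 1) (\<lambda>_. -1 :: int)) = 1"
    using odd gt_2 by (simp add: det_mat_diag)
  moreover assume "int p dvd det power_mat"
  then have "int p dvd det (power_mat * E)"
    by (simp add: det_mult[OF power_mat_carrier E])
  ultimately have "int p dvd 1"
    by (simp add: cong_dvd_iff)
  then show False
    using gt_2 by simp
qed

definition form_mat :: "int \<Rightarrow> int \<Rightarrow> int mat" where
  "form_mat b c = mat (p - 1) (p - 1)
     (\<lambda>(x, y). (int (x + 1) ^ 2 + b * int (x + 1) * int (y + 1) + c * int (y + 1) ^ 2) ^ (p - 2))"

definition form_moment :: "int \<Rightarrow> int \<Rightarrow> nat \<Rightarrow> int" where
  "form_moment b c k = (\<Sum>t\<in>{1..int p - 1}. t ^ k * (1 + b * t + c * t ^ 2) ^ (p - 2))"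

lemma form_mat_carrier: "form_mat b c \<in> carrier_mat (p - 1) (p - 1)"
  by (simp add: form_mat_def)

text \<open>The substitution y = x s turns row x of form_mat b c * power_mat into a multiple of the
  moments of the dehomogenised form 1 + b s + c s^2.\<close>

lemma form_mat_mult_power_mat_cong:
  assumes x: "x < p - 1" and k: "k < p - 1"
  shows "[(form_mat b c * power_mat) $$ (x, k) =
          int (x + 1) ^ (p - 3) * power_mat $$ (x, k) * form_moment b c (k + 1)] (mod int p)"
proof -
  define a where "a = int (x + 1)"
  have a: "\<not> int p dvd a"
    using x zdvd_not_zless[of a "int p"] unfolding a_def by auto
  define F where "F t = (a ^ 2 + b * a * t + c * t ^ 2) ^ (p - 2) * t ^ (k + 1)" for t
  have "(form_mat b c * power_mat) $$ (x, k) = (\<Sum>j<p - 1. form_mat b c $$ (x, j) * power_mat $$ (j, k))"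
    by (rule index_mult_mat_sum[OF form_mat_carrier power_mat_carrier x k])
  also have "\<dots> = (\<Sum>j<p - 1. F (int j + 1))"
    using x k by (intro sum.cong) (auto simp: form_mat_def power_mat_def F_def a_def add.commute)
  also have "\<dots> = (\<Sum>t\<in>{1..int p - 1}. F t)"
    by (rule sum.reindex_bij_witness[of _ "\<lambda>t. nat (t - 1)" "\<lambda>j. int j + 1"]) auto
  also have "\<dots> = (\<Sum>s\<in>{1..int p - 1}. F ((a * s) mod int p))"
    by (rule sum_reindex_mult_mod_prime[OF prime a])
  also have "[\<dots> = (\<Sum>s\<in>{1..int p - 1}. F (a * s))] (mod int p)"
    unfolding F_def by (intro cong_sum cong_mult cong_pow cong_add cong_refl) (auto simp: cong_def)
  also have "(\<Sum>s\<in>{1..int p - 1}. F (a * s)) = a ^ (2 * (p - 2) + (k + 1)) * form_moment b c (k + 1)"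
  proof -
    have "F (a * s) = (a ^ 2) ^ (p - 2) * a ^ (k + 1) * (s ^ (k + 1) * (1 + b * s + c * s ^ 2) ^ (p - 2))" for s
    proof -
      have "a ^ 2 + b * a * (a * s) + c * (a * s) ^ 2 = a ^ 2 * (1 + b * s + c * s ^ 2)"
        by (simp add: algebra_simps power2_eq_square)
      then show ?thesis
        unfolding F_def by (simp only: power_mult_distrib mult_ac)
    qed
    then show ?thesis
      unfolding form_moment_def by (simp add: sum_distrib_left power_mult power_add mult_ac)
  qed
  also have "[a ^ (2 * (p - 2) + (k + 1)) * form_moment b c (k + 1) =
              a ^ (p - 3) * a ^ (k + 1) * form_moment b c (k + 1)] (mod int p)"
  proof -
    have "2 * (p - 2) + (k + 1) = (p - 1) + (p - 3 + (k + 1))"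
      using gt_2 by simp
    then have e: "a ^ (2 * (p - 2) + (k + 1)) = a ^ (p - 1) * (a ^ (p - 3) * a ^ (k + 1))"
      by (simp only: power_add)
    have "[a ^ (p - 1) * (a ^ (p - 3) * a ^ (k + 1)) = 1 * (a ^ (p - 3) * a ^ (k + 1))] (mod int p)"
      using fermat_theorem_int[OF prime a] by (intro cong_mult cong_refl)
    then have "[a ^ (2 * (p - 2) + (k + 1)) = a ^ (p - 3) * a ^ (k + 1)] (mod int p)"
      by (simp only: e mult_1_left)
    then show ?thesis
      by (rule cong_scalar_right)
  qed
  finally show ?thesis
    using x k by (simp add: power_mat_def a_def)
qed

lemma det_mat_diag_power_cong:
  "[det (mat_diag (p - 1) (\<lambda>x. int (x + 1) ^ (p - 3))) = 1] (mod int p)"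
proof -
  have "det (mat_diag (p - 1) (\<lambda>x. int (x + 1) ^ (p - 3))) = (\<Prod>x<p - 1. int (x + 1)) ^ (p - 3)"
    by (simp add: det_mat_diag prod_power_distrib)
  also have "(\<Prod>x<p - 1. int (x + 1)) = fact (p - 1)"
    by (simp add: fact_prod_Suc atLeast0LessThan of_nat_prod)
  also have "[(fact (p - 1) :: int) ^ (p - 3) = (-1) ^ (p - 3)] (mod int p)"
    by (rule cong_pow) (use wilson_theorem[OF prime] in simp)
  also have "(-1 :: int) ^ (p - 3) = 1"
    using odd gt_2 by (simp add: even_diff_nat)
  finally show ?thesis .
qed

lemma det_form_mat_cong:
  "[det (form_mat b c) = (\<Prod>k<p - 1. form_moment b c (k + 1))] (mod int p)"
proof -
  let ?C = power_mat
  let ?L = "mat_diag (p - 1) (\<lambda>x. int (x + 1) ^ (p - 3))"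
  let ?R = "mat_diag (p - 1) (\<lambda>k. form_moment b c (k + 1))"
  have LC: "?L * ?C \<in> carrier_mat (p - 1) (p - 1)"
    by (rule mult_carrier_mat[OF mat_diag_dim power_mat_carrier])
  have AC: "form_mat b c * ?C \<in> carrier_mat (p - 1) (p - 1)"
    by (rule mult_carrier_mat[OF form_mat_carrier power_mat_carrier])
  have LCR: "?L * ?C * ?R \<in> carrier_mat (p - 1) (p - 1)"
    by (rule mult_carrier_mat[OF LC mat_diag_dim])
  have "[det (form_mat b c * ?C) = det (?L * ?C * ?R)] (mod int p)"
  proof (rule det_cong[OF AC LCR])
    fix x k assume xk: "x < p - 1" "k < p - 1"
    have "(?L * ?C * ?R) $$ (x, k) = (?L * ?C) $$ (x, k) * form_moment b c (k + 1)"
      using xk unfolding mat_diag_mult_right[OF LC] by simp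
    also have "(?L * ?C) $$ (x, k) = int (x + 1) ^ (p - 3) * ?C $$ (x, k)"
      using xk unfolding mat_diag_mult_left[OF power_mat_carrier] by simp
    finally show "[(form_mat b c * ?C) $$ (x, k) = (?L * ?C * ?R) $$ (x, k)] (mod int p)"
      using form_mat_mult_power_mat_cong[OF xk] by simp
  qed
  moreover have "det (form_mat b c * ?C) = det (form_mat b c) * det ?C"
    by (rule det_mult[OF form_mat_carrier power_mat_carrier])
  moreover have "det (?L * ?C * ?R) = det ?L * det ?C * det ?R"
    using det_mult[OF LC mat_diag_dim] det_mult[OF mat_diag_dim power_mat_carrier] by simp
  ultimately have "[det (form_mat b c) * det ?C = det ?L * det ?C * det ?R] (mod int p)"
    by simp
  also have "[det ?L * det ?C * det ?R = 1 * det ?C * det ?R] (mod int p)"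
    by (intro cong_mult cong_refl det_mat_diag_power_cong)
  finally have "[det ?C * det (form_mat b c) = det ?C * (\<Prod>k<p - 1. form_moment b c (k + 1))] (mod int p)"
    by (simp add: det_mat_diag mult.commute)
  moreover have "coprime (det ?C) (int p)"
    using det_power_mat_not_dvd prime_int prime_imp_coprime coprime_commute by blast
  ultimately show ?thesis
    by (simp add: cong_mult_lcancel)
qed

end

locale prime_sqrt_minus_one = odd_prime +
  fixes i h :: int
  assumes p_mod_4: "p mod 4 = 1"
    and i_square: "int p dvd i\<^sup>2 + 1"
    and h_half: "2 * h = int p + 1"

begin

text \<open>All congruences involving i and h below follow from i^2 \<equiv> -1 and 2 h \<equiv> 1; each proof
  supplies the coefficients A, B expressing the difference in the ideal generated by these relations.\<close>

lemma cong_by_certificate: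
  assumes "a - b = (2 * h - 1) * A + (i\<^sup>2 + 1) * B"
  shows "[a = b] (mod int p)"
proof -
  have "int p dvd 2 * h - 1"
    using h_half by simp
  then have "int p dvd (2 * h - 1) * A + (i\<^sup>2 + 1) * B"
    by (intro dvd_add dvd_mult2[of _ _ A] dvd_mult2[OF i_square, of B])
  then show ?thesis
    using assms by (simp add: cong_iff_dvd_diff)
qed

lemma pred_pred_mod_4: "(p - 2) mod 4 = 3"
proof -
  define q where "q = p div 4"
  have "p = 4 * q + 1"
    unfolding q_def using p_mod_4 by (metis div_mult_mod_eq mult.commute)
  with gt_2 have "p - 2 = 4 * (q - 1) + 3"
    by linarith
  then show ?thesis
    by simp
qed

definition rho :: int where "rho = (i - 1) * h"

definition sigma :: int where "sigma = - (i + 1) * h"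

lemma i_not_dvd: "\<not> int p dvd i"
  by (rule not_dvd_if_cong_inverse[OF prime, of _ "- i"], rule cong_by_certificate[of _ _ 0 "- 1"])
     (simp add: power2_eq_square)

lemma h_not_dvd: "\<not> int p dvd h"
  by (rule not_dvd_if_cong_inverse[OF prime, of _ 2], rule cong_by_certificate[of _ _ 1 0]) simp

lemma rho_not_dvd: "\<not> int p dvd rho"
  by (rule not_dvd_if_cong_inverse[OF prime, of _ "- (i + 1)"], rule cong_by_certificate[of _ _ 1 "- h"])
     (simp add: rho_def algebra_simps power2_eq_square)

lemma sigma_not_dvd: "\<not> int p dvd sigma"
  by (rule not_dvd_if_cong_inverse[OF prime, of _ "i - 1"], rule cong_by_certificate[of _ _ 1 "- h"])
     (simp add: sigma_def algebra_simps power2_eq_square)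

lemma sigma_cong: "[sigma = i * rho] (mod int p)"
  by (rule cong_by_certificate[of _ _ 0 "- h"]) (simp add: rho_def sigma_def algebra_simps power2_eq_square)

lemma power_i_cong: "[i ^ n = i ^ (n mod 4)] (mod int p)"
proof -
  have "[i ^ 4 = 1] (mod int p)"
    by (rule cong_by_certificate[of _ _ 0 "i\<^sup>2 - 1"]) (simp add: algebra_simps power2_eq_square power4_eq_xxxx)
  then have "[(i ^ 4) ^ (n div 4) * i ^ (n mod 4) = 1 ^ (n div 4) * i ^ (n mod 4)] (mod int p)"
    by (intro cong_mult cong_pow cong_refl)
  moreover have "i ^ n = (i ^ 4) ^ (n div 4) * i ^ (n mod 4)"
    by (metis div_mult_mod_eq power_add power_mult mult.commute)
  ultimately show ?thesis
    by simp
qed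

lemma power_sigma_cong: "[sigma ^ n = i ^ (n mod 4) * rho ^ n] (mod int p)"
proof -
  have "[sigma ^ n = i ^ n * rho ^ n] (mod int p)"
    using cong_pow[OF sigma_cong] by (simp add: power_mult_distrib)
  also have "[i ^ n * rho ^ n = i ^ (n mod 4) * rho ^ n] (mod int p)"
    by (intro cong_mult cong_refl power_i_cong)
  finally show ?thesis .
qed

lemma inverse_power_two_cong: "[2 ^ (p - 2) = h] (mod int p)"
proof -
  have "[2 * 2 ^ (p - 2) = 1] (mod int p)"
    by (rule fermat_inverse_int[OF prime], rule not_dvd_if_cong_inverse[OF prime, of _ h],
        rule cong_by_certificate[of _ _ 1 0]) simp
  then have "[h * (2 * 2 ^ (p - 2)) = h * 1] (mod int p)"
    by (rule cong_scalar_left)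
  moreover have "[2 ^ (p - 2) = h * (2 * 2 ^ (p - 2))] (mod int p)"
    by (rule cong_by_certificate[of _ _ "- (2 ^ (p - 2))" 0]) (simp add: algebra_simps)
  ultimately show ?thesis
    using cong_trans by simp
qed

lemma sigma_minus_rho: "[sigma - rho = - i] (mod int p)"
  by (rule cong_by_certificate[of _ _ "- i" 0]) (simp add: rho_def sigma_def algebra_simps)

lemma sigma_minus_rho_not_dvd: "\<not> int p dvd sigma - rho"
  using cong_dvd_iff[OF sigma_minus_rho] i_not_dvd by simp

lemma inverse_power_sigma_minus_rho: "[(sigma - rho) ^ (p - 2) = i] (mod int p)"
proof -
  have "[(sigma - rho) ^ (p - 2) = (- i) ^ (p - 2)] (mod int p)"
    by (rule cong_pow[OF sigma_minus_rho])
  also have "(- i) ^ (p - 2) = - (i ^ (p - 2))"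
    by (rule power_minus_odd[OF odd_pred_pred])
  also have "[- (i ^ (p - 2)) = - (i ^ 3)] (mod int p)"
  proof -
    have "(p - 2) mod 4 = 3"
      by (rule pred_pred_mod_4)
    then show ?thesis
      using power_i_cong[of "p - 2"] by (simp add: cong_minus_minus_iff)
  qed
  also have "[- (i ^ 3) = i] (mod int p)"
    by (rule cong_by_certificate[of _ _ 0 "- i"]) (simp add: algebra_simps power2_eq_square power3_eq_cube)
  finally show ?thesis .
qed

lemma form_factorization: "[1 + 2 * t + 2 * t\<^sup>2 = 2 * ((t - rho) * (t - sigma))] (mod int p)"
  by (rule cong_by_certificate[of _ _ "- 1 - 2 * h - 2 * t" "2 * h\<^sup>2"])
     (simp add: rho_def sigma_def algebra_simps power2_eq_square)

lemma form_power_partial_fractions: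
  "[(1 + 2 * t + 2 * t\<^sup>2) ^ (p - 2) = (- i * h) * ((t - rho) ^ (p - 2) - (t - sigma) ^ (p - 2))
      - h * ((if int p dvd t - rho then 1 else 0) + (if int p dvd t - sigma then 1 else 0))] (mod int p)"
proof -
  define X Y where "X = (t - rho) ^ (p - 2)" and "Y = (t - sigma) ^ (p - 2)"
  define c where "c = (if int p dvd t - rho then 1 else 0) + (if int p dvd t - sigma then (1::int) else 0)"
  have "[(1 + 2 * t + 2 * t\<^sup>2) ^ (p - 2) = (2 * ((t - rho) * (t - sigma))) ^ (p - 2)] (mod int p)"
    by (rule cong_pow[OF form_factorization])
  also have "(2 * ((t - rho) * (t - sigma))) ^ (p - 2) = 2 ^ (p - 2) * (X * Y)"
    unfolding X_def Y_def by (simp add: power_mult_distrib)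
  also have "[2 ^ (p - 2) * (X * Y) =
              h * ((sigma - rho) ^ (p - 2) * (Y - X) + ((sigma - rho) ^ (p - 2))\<^sup>2 * c)] (mod int p)"
    unfolding X_def Y_def c_def
    by (intro cong_mult inverse_power_two_cong inverse_power_mult_partial_fractions sigma_minus_rho_not_dvd)
       simp
  also have "[h * ((sigma - rho) ^ (p - 2) * (Y - X) + ((sigma - rho) ^ (p - 2))\<^sup>2 * c) =
             h * (i * (Y - X) + i\<^sup>2 * c)] (mod int p)"
    using inverse_power_sigma_minus_rho by (intro cong_mult cong_add cong_pow cong_refl)
  also have "[h * (i * (Y - X) + i\<^sup>2 * c) = (- i * h) * (X - Y) - h * c] (mod int p)"
    by (rule cong_by_certificate[of _ _ 0 "h * c"]) (simp add: algebra_simps)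
  finally show ?thesis
    unfolding X_def Y_def c_def .
qed

lemma form_moment_partial_fractions:
  "[form_moment 2 2 k = (- i * h) * ((\<Sum>t\<in>{1..int p - 1}. t ^ k * (t - rho) ^ (p - 2))
                                   - (\<Sum>t\<in>{1..int p - 1}. t ^ k * (t - sigma) ^ (p - 2)))
                        - h * (rho ^ k + sigma ^ k)] (mod int p)"
proof -
  let ?U = "{1..int p - 1}"
  define e where "e a t = (if int p dvd t - a then 1 else (0::int))" for a t
  have "[form_moment 2 2 k = (\<Sum>t\<in>?U. t ^ k * ((- i * h) * ((t - rho) ^ (p - 2) - (t - sigma) ^ (p - 2))
                                  - h * (e rho t + e sigma t)))] (mod int p)"
    unfolding form_moment_def e_def by (intro cong_sum cong_mult cong_refl form_power_partial_fractions)
  also have "(\<Sum>t\<in>?U. t ^ k * ((- i * h) * ((t - rho) ^ (p - 2) - (t - sigma) ^ (p - 2))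
                                  - h * (e rho t + e sigma t)))
    = (- i * h) * ((\<Sum>t\<in>?U. t ^ k * (t - rho) ^ (p - 2)) - (\<Sum>t\<in>?U. t ^ k * (t - sigma) ^ (p - 2)))
      - h * ((\<Sum>t\<in>?U. t ^ k * e rho t) + (\<Sum>t\<in>?U. t ^ k * e sigma t))"
  proof -
    have "(\<Sum>t\<in>?U. t ^ k * ((- i * h) * ((t - rho) ^ (p - 2) - (t - sigma) ^ (p - 2))
                                  - h * (e rho t + e sigma t)))
      = (\<Sum>t\<in>?U. (- i * h) * (t ^ k * (t - rho) ^ (p - 2)) - (- i * h) * (t ^ k * (t - sigma) ^ (p - 2))
                     - (h * (t ^ k * e rho t) + h * (t ^ k * e sigma t)))"
      by (rule sum.cong) (simp_all add: algebra_simps)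
    then show ?thesis
      by (simp only: sum_subtractf sum.distrib sum_distrib_left right_diff_distrib distrib_left)
  qed
  also have "[\<dots> = (- i * h) * ((\<Sum>t\<in>?U. t ^ k * (t - rho) ^ (p - 2)) - (\<Sum>t\<in>?U. t ^ k * (t - sigma) ^ (p - 2)))
      - h * (rho ^ k + sigma ^ k)] (mod int p)"
    unfolding e_def using prime rho_not_dvd sigma_not_dvd
    by (intro cong_diff cong_mult cong_add cong_refl sum_power_indicator_cong)
  finally show ?thesis .
qed

text \<open>moment_factor k is the closed form, by residue of k mod 4, of form_moment 2 2 k / (h rho^(k-1))
  found in form_moment_cong below.\<close>

definition moment_factor :: "nat \<Rightarrow> int" where
  "moment_factor k =
     (if k mod 4 = 0 then (1 - i) * (1 - int k)
      else if k mod 4 = 1 then - rho * (1 + i)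
      else if k mod 4 = 2 then (1 + i) * int k
      else i * (2 * int k - 1))"

definition moment_term :: "nat \<Rightarrow> int" where
  "moment_term k = rho ^ (k - 1) * moment_factor k"

lemma moment_factor_cong:
  "[(- i * h) * (1 - i ^ ((k mod 4 + 3) mod 4)) * (- int k) - h * (rho + i ^ (k mod 4) * rho)
          = h * moment_factor k] (mod int p)"
proof -
  have "k mod 4 < 4"
    by simp
  then consider "k mod 4 = 0" | "k mod 4 = 1" | "k mod 4 = 2" | "k mod 4 = 3"
    by linarith
  then show ?thesis
  proof cases
    case 1
    then show ?thesis
      unfolding moment_factor_def
      by (intro cong_by_certificate[of _ _ "h - i * h" "h * int k - i\<^sup>2 * h * int k"])
         (simp add: rho_def algebra_simps power2_eq_square power3_eq_cube)
  next
    case 2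
    then show ?thesis
      unfolding moment_factor_def
      by (intro cong_by_certificate[of _ _ 0 0]) (simp add: rho_def algebra_simps power2_eq_square)
  next
    case 3
    then show ?thesis
      unfolding moment_factor_def
      by (intro cong_by_certificate[of _ _ 0 "- h * int k + h\<^sup>2 - i * h\<^sup>2"])
         (simp add: rho_def algebra_simps power2_eq_square power3_eq_cube)
  next
    case 4
    then show ?thesis
      unfolding moment_factor_def
      by (intro cong_by_certificate[of _ _ "- i * h" "h\<^sup>2 - i * h * int k + i * h\<^sup>2 - i\<^sup>2 * h\<^sup>2"])
         (simp add: rho_def algebra_simps power2_eq_square power3_eq_cube)
  qed
qed

lemma form_moment_cong:
  assumes k: "1 \<le> k" "k \<le> p - 1"
  shows "[form_moment 2 2 k = h * moment_term k] (mod int p)"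
proof -
  let ?W = "\<lambda>c. \<Sum>t\<in>{1..int p - 1}. t ^ k * (t - c) ^ (p - 2)"
  define R where "R = rho ^ (k - 1)"
  define a b where "a = (k mod 4 + 3) mod 4" and "b = k mod 4"
  have "(k - 1) mod 4 = a"
  proof -
    have "k + 3 = (k - 1) + 4"
      using k by simp
    then show ?thesis
      unfolding a_def by (metis mod_add_left_eq mod_add_self2)
  qed
  then have "[sigma ^ (k - 1) = i ^ a * R] (mod int p)"
    unfolding R_def using power_sigma_cong[of "k - 1"] by simp
  then have W_sigma: "[?W sigma = i ^ a * R * - int k] (mod int p)"
    using sum_power_mult_inverse_diff_cong[OF k sigma_not_dvd] cong_scalar_right cong_trans by blast
  have W_rho: "[?W rho = R * - int k] (mod int p)"
    unfolding R_def by (rule sum_power_mult_inverse_diff_cong[OF k rho_not_dvd])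
  have rho_k: "rho ^ k = R * rho"
    unfolding R_def using k by (simp flip: power_Suc2)
  have sigma_k: "[sigma ^ k = i ^ b * (R * rho)] (mod int p)"
    unfolding b_def rho_k[symmetric] by (rule power_sigma_cong)
  have "[form_moment 2 2 k = (- i * h) * (?W rho - ?W sigma) - h * (rho ^ k + sigma ^ k)] (mod int p)"
    by (rule form_moment_partial_fractions)
  also have "[(- i * h) * (?W rho - ?W sigma) - h * (rho ^ k + sigma ^ k) =
              (- i * h) * (R * - int k - i ^ a * R * - int k) - h * (R * rho + i ^ b * (R * rho))] (mod int p)"
    unfolding rho_k using W_rho W_sigma sigma_k by (intro cong_diff cong_mult cong_add cong_refl)
  also have "(- i * h) * (R * - int k - i ^ a * R * - int k) - h * (R * rho + i ^ b * (R * rho))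
           = R * ((- i * h) * (1 - i ^ a) * (- int k) - h * (rho + i ^ b * rho))"
    by (simp add: algebra_simps)
  also have "[\<dots> = R * (h * moment_factor k)] (mod int p)"
    unfolding a_def b_def by (intro cong_mult cong_refl moment_factor_cong)
  finally show ?thesis
    unfolding R_def moment_term_def by (simp add: mult_ac)
qed

lemma moment_term_quadruple_cong:
  "[moment_term (4 * q + 1) * moment_term (4 * q + 2) * moment_term (4 * q + 3) * moment_term (4 * q + 4) =
          (2 * rho ^ (8 * q + 4))\<^sup>2 * ((4 * int q + 2) * (4 * int q + 3) * (8 * int q + 5))] (mod int p)"
proof -
  let ?B = "moment_factor (4 * q + 1) * moment_factor (4 * q + 2) * moment_factor (4 * q + 3) *
            moment_factor (4 * q + 4)"
  have "moment_term (4 * q + 1) * moment_term (4 * q + 2) * moment_term (4 * q + 3) * moment_term (4 * q + 4) =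
        rho ^ (16 * q + 6) * ?B"
  proof -
    have "rho ^ (16 * q + 6) = rho ^ (4 * q) * rho ^ (4 * q + 1) * rho ^ (4 * q + 2) * rho ^ (4 * q + 3)"
      unfolding power_add[symmetric] by (rule arg_cong[where f = "power rho"]) simp
    moreover have "4 * q + 1 - 1 = 4 * q" "4 * q + 2 - 1 = 4 * q + 1" "4 * q + 3 - 1 = 4 * q + 2"
      "4 * q + 4 - 1 = 4 * q + 3"
      by simp_all
    ultimately show ?thesis
      unfolding moment_term_def by (simp only: mult_ac)
  qed
  also have "?B = (- rho * (1 + i)) * ((1 + i) * (4 * int q + 2)) * (i * (2 * (4 * int q + 3) - 1))
                  * ((1 - i) * (1 - (4 * int q + 4)))"
  proof -
    have "(4 * q + 1) mod 4 = 1" "(4 * q + 2) mod 4 = 2" "(4 * q + 3) mod 4 = 3" "(4 * q + 4) mod 4 = 0"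
      by presburger+
    then show ?thesis
      unfolding moment_factor_def by simp
  qed
  also have "[rho ^ (16 * q + 6) * ((- rho * (1 + i)) * ((1 + i) * (4 * int q + 2))
                  * (i * (2 * (4 * int q + 3) - 1)) * ((1 - i) * (1 - (4 * int q + 4)))) =
              rho ^ (16 * q + 6) * (4 * rho\<^sup>2 * ((4 * int q + 2) * (4 * int q + 3) * (8 * int q + 5)))] (mod int p)"
    by (rule cong_scalar_left, rule cong_by_certificate[of _ _
        "120*i*h + 592*i*h*(int q) + 960*i*h*(int q)^2 + 512*i*h*(int q)^3"
        "(-120)*h^2 + (-592)*h^2*(int q) + (-960)*h^2*(int q)^2 + (-512)*h^2*(int q)^3 + 90*i*h
         + 444*i*h*(int q) + 720*i*h*(int q)^2 + 384*i*h*(int q)^3 + (-30)*i^3*h + (-148)*i^3*h*(int q)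
         + (-240)*i^3*h*(int q)^2 + (-128)*i^3*h*(int q)^3"])
       (simp add: rho_def algebra_simps power2_eq_square power3_eq_cube)
  also have "rho ^ (16 * q + 6) * (4 * rho\<^sup>2 * ((4 * int q + 2) * (4 * int q + 3) * (8 * int q + 5))) =
             (2 * rho ^ (8 * q + 4))\<^sup>2 * ((4 * int q + 2) * (4 * int q + 3) * (8 * int q + 5))"
    by (simp add: power_mult_distrib mult_ac add.commute flip: power_add power_mult)
  finally show ?thesis .
qed

lemma prod_moment_term_cong:
  assumes "p - 1 = 4 * n"
  shows "[(\<Prod>k<p - 1. moment_term (k + 1)) = (\<Prod>q<n. 2 * rho ^ (8 * q + 4))\<^sup>2 *
           ((\<Prod>q<n. 4 * int q + 2) * (\<Prod>q<n. 4 * int q + 3) * (\<Prod>q<n. 8 * int q + 5))] (mod int p)"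
proof -
  have groups: "(\<Prod>k<p - 1. moment_term (k + 1)) =
      (\<Prod>q<n. moment_term (4 * q + 1) * moment_term (4 * q + 2) * moment_term (4 * q + 3) * moment_term (4 * q + 4))"
    unfolding assms by (rule prod_lessThan_mult_4[of moment_term])
  have "[(\<Prod>q<n. moment_term (4 * q + 1) * moment_term (4 * q + 2) * moment_term (4 * q + 3) * moment_term (4 * q + 4))
       = (\<Prod>q<n. (2 * rho ^ (8 * q + 4))\<^sup>2 * ((4 * int q + 2) * (4 * int q + 3) * (8 * int q + 5)))] (mod int p)"
    by (intro cong_prod moment_term_quadruple_cong)
  also have "(\<Prod>q<n. (2 * rho ^ (8 * q + 4))\<^sup>2 * ((4 * int q + 2) * (4 * int q + 3) * (8 * int q + 5))) =
      (\<Prod>q<n. 2 * rho ^ (8 * q + 4))\<^sup>2 *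
      ((\<Prod>q<n. 4 * int q + 2) * (\<Prod>q<n. 4 * int q + 3) * (\<Prod>q<n. 8 * int q + 5))"
    by (simp only: prod.distrib prod_power_distrib[symmetric])
  finally show ?thesis
    unfolding groups .
qed

lemma prod_moment_term_cong_square:
  assumes p: "p = 8 * m + 1"
  obtains z where "\<not> int p dvd z" and "[(\<Prod>k<p - 1. moment_term (k + 1)) = z\<^sup>2] (mod int p)"
proof -
  define Z where "Z = (\<Prod>q<2 * m. 2 * rho ^ (8 * q + 4))"
  define X where "X = (\<Prod>q<2 * m. 4 * int q + 2)"
  define W where "W = (\<Prod>q<m. 8 * int q + 4)"
  have P3: "[(\<Prod>q<2 * m. 4 * int q + 3) = (-1) ^ (2 * m) * X] (mod int p)"
    unfolding X_def using p by (intro prod_4_mult_plus_3_cong) simp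
  have "[-1 = i\<^sup>2] (mod int p)"
    by (rule cong_by_certificate[of _ _ 0 "- 1"]) simp
  then have "[(-1) ^ m * W\<^sup>2 = (i\<^sup>2) ^ m * W\<^sup>2] (mod int p)"
    by (intro cong_scalar_right cong_pow)
  then have P5: "[(\<Prod>q<2 * m. 8 * int q + 5) = (i\<^sup>2) ^ m * W\<^sup>2] (mod int p)"
    unfolding W_def using prod_8_mult_plus_5_cong[OF p] cong_trans by blast
  have "[(\<Prod>k<p - 1. moment_term (k + 1)) =
         Z\<^sup>2 * (X * (\<Prod>q<2 * m. 4 * int q + 3) * (\<Prod>q<2 * m. 8 * int q + 5))] (mod int p)"
    unfolding Z_def X_def by (rule prod_moment_term_cong) (simp add: p)
  also have "[Z\<^sup>2 * (X * (\<Prod>q<2 * m. 4 * int q + 3) * (\<Prod>q<2 * m. 8 * int q + 5)) =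
              Z\<^sup>2 * (X * ((-1) ^ (2 * m) * X) * ((i\<^sup>2) ^ m * W\<^sup>2))] (mod int p)"
    by (intro cong_mult cong_refl P3 P5)
  also have "Z\<^sup>2 * (X * ((-1) ^ (2 * m) * X) * ((i\<^sup>2) ^ m * W\<^sup>2)) = (Z * X * i ^ m * W)\<^sup>2"
    by (simp add: power_mult_distrib power_mult[symmetric] power2_eq_square mult.commute)
  finally have "[(\<Prod>k<p - 1. moment_term (k + 1)) = (Z * X * i ^ m * W)\<^sup>2] (mod int p)" .
  moreover have "\<not> int p dvd Z * X * i ^ m * W"
  proof -
    have "\<not> int p dvd 2"
      using gt_2 zdvd_not_zless[of 2 "int p"] by simp
    then have "\<not> int p dvd 2 * rho ^ n" for n
      using rho_not_dvd prime_dvd_power[OF prime_int] by (auto simp: prime_dvd_mult_iff[OF prime_int])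
    moreover have "\<not> int p dvd 4 * int q + 2" if "q < 2 * m" for q
      using that p zdvd_not_zless[of "4 * int q + 2" "int p"] by simp
    moreover have "\<not> int p dvd 8 * int q + 4" if "q < m" for q
      using that p zdvd_not_zless[of "8 * int q + 4" "int p"] by simp
    ultimately show ?thesis
      using i_not_dvd prime_dvd_power[OF prime_int] unfolding Z_def X_def W_def
      by (auto simp: prime_dvd_mult_iff[OF prime_int] prime_dvd_prod_iff[OF _ prime_int])
  qed
  ultimately show ?thesis
    using that by blast
qed

lemma prod_form_moment_cong_square:
  assumes "p mod 8 = 1"
  obtains y where "\<not> int p dvd y" and "[(\<Prod>k<p - 1. form_moment 2 2 (k + 1)) = y\<^sup>2] (mod int p)"
proof -
  define m where "m = p div 8"
  have p: "p = 8 * m + 1"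
    unfolding m_def using assms div_mult_mod_eq[of p 8] by linarith
  obtain z where z: "\<not> int p dvd z" "[(\<Prod>k<p - 1. moment_term (k + 1)) = z\<^sup>2] (mod int p)"
    using prod_moment_term_cong_square[OF p] .
  have "[(\<Prod>k<p - 1. form_moment 2 2 (k + 1)) = (\<Prod>k<p - 1. h * moment_term (k + 1))] (mod int p)"
    by (intro cong_prod form_moment_cong) auto
  also have "(\<Prod>k<p - 1. h * moment_term (k + 1)) = (h ^ (4 * m))\<^sup>2 * (\<Prod>k<p - 1. moment_term (k + 1))"
    using p by (simp add: prod.distrib power_mult[symmetric] mult.commute)
  also have "[(h ^ (4 * m))\<^sup>2 * (\<Prod>k<p - 1. moment_term (k + 1)) = (h ^ (4 * m) * z)\<^sup>2] (mod int p)"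
    unfolding power_mult_distrib[of "h ^ (4 * m)"] by (rule cong_scalar_left[OF z(2)])
  finally have "[(\<Prod>k<p - 1. form_moment 2 2 (k + 1)) = (h ^ (4 * m) * z)\<^sup>2] (mod int p)" .
  moreover have "\<not> int p dvd h ^ (4 * m) * z"
    using z(1) h_not_dvd prime_dvd_power[OF prime_int] by (auto simp: prime_dvd_mult_iff[OF prime_int])
  ultimately show ?thesis
    using that by blast
qed

lemma prod_form_moment_cong_zero:
  assumes "p mod 8 = 5"
  shows "[(\<Prod>k<p - 1. form_moment 2 2 (k + 1)) = 0] (mod int p)"
proof -
  define r where "r = p div 8"
  have p: "p = 8 * r + 5"
    unfolding r_def using assms div_mult_mod_eq[of p 8] by linarith
  define k where "k = 4 * r + 3"
  have k: "1 \<le> k" "k \<le> p - 1" "k mod 4 = 3" "2 * int k - 1 = int p"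
    unfolding k_def using p by simp_all
  have "[form_moment 2 2 k = h * (rho ^ (k - 1) * (i * int p))] (mod int p)"
    using form_moment_cong[OF k(1,2)] k(3,4) by (simp add: moment_term_def moment_factor_def)
  then have "int p dvd form_moment 2 2 ((k - 1) + 1)"
    using k(1) by (simp add: cong_dvd_iff)
  also have "form_moment 2 2 ((k - 1) + 1) dvd (\<Prod>k<p - 1. form_moment 2 2 (k + 1))"
    using k(1,2) by (intro dvd_prodI) auto
  finally show ?thesis
    by (simp add: cong_0_iff)
qed

end

lemma Legendre_eq_1_if_cong_square:
  assumes "prime p" and "\<not> p dvd y" and "[a = y\<^sup>2] (mod p)"
  shows "Legendre a p = 1"
proof -
  have "\<not> [a = 0] (mod p)"
  proof
    assume "[a = 0] (mod p)"
    then have "p dvd y\<^sup>2"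
      using assms(3) by (metis cong_dvd_iff cong_0_iff)
    with assms(1,2) show False
      using prime_dvd_power by blast
  qed
  moreover have "QuadRes p a"
    unfolding QuadRes_def using assms(3) cong_sym by blast
  ultimately show ?thesis
    unfolding Legendre_def by simp
qed

lemma exists_sqrt_minus_one_mod_prime:
  assumes "prime p" and "p mod 4 = 1"
  obtains i where "int p dvd i\<^sup>2 + 1"
proof -
  have "2 < p"
    using assms prime_ge_2_nat[OF assms(1)] by (cases "p = 2") auto
  have "even ((p - 1) div 2)"
    using assms(2) by presburger
  then have "[Legendre (-1) (int p) = 1] (mod int p)"
    using euler_criterion[OF assms(1) \<open>2 < p\<close>, of "-1"] by simp
  moreover have "\<not> [-1 = 1] (mod int p)" and "\<not> [-1 = 0] (mod int p)"
    using \<open>2 < p\<close> by (simp_all add: cong_iff_dvd_diff zdvd_not_zless)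
  ultimately have "Legendre (-1) (int p) = 1"
    unfolding Legendre_def by (auto split: if_splits)
  then obtain y where "[y\<^sup>2 = -1] (mod int p)"
    unfolding Legendre_def QuadRes_def by (auto split: if_splits)
  then show ?thesis
    using that[of y] by (simp add: cong_iff_dvd_diff)
qed

theorem theorem1p2:
  fixes p :: nat
  assumes "prime p" and "p mod 4 = 1"
  shows "(p mod 8 = 1 \<longrightarrow> Legendre (D22 p) (int p) = 1) \<and>
         (p mod 8 = 5 \<longrightarrow> Legendre (D22 p) (int p) = 0)"
proof -
  have "2 < p"
    using assms prime_ge_2_nat[OF assms(1)] by (cases "p = 2") auto
  interpret odd_prime p
    using assms(1) \<open>2 < p\<close> by unfold_locales
  obtain i where i: "int p dvd i\<^sup>2 + 1"
    using exists_sqrt_minus_one_mod_prime[OF assms] .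
  have "odd (int p)"
    using odd by simp
  then have "2 * ((int p + 1) div 2) = int p + 1"
    by presburger
  interpret prime_sqrt_minus_one p i "(int p + 1) div 2"
    using assms(2) i \<open>2 * ((int p + 1) div 2) = int p + 1\<close> by unfold_locales
  have D22: "[D22 p = (\<Prod>k<p - 1. form_moment 2 2 (k + 1))] (mod int p)"
    using det_form_mat_cong[of 2 2] by (simp add: D22_def Dmat_def form_mat_def)
  show ?thesis
  proof (intro conjI impI)
    assume "p mod 8 = 1"
    then obtain y where "\<not> int p dvd y" "[(\<Prod>k<p - 1. form_moment 2 2 (k + 1)) = y\<^sup>2] (mod int p)"
      by (rule prod_form_moment_cong_square)
    then show "Legendre (D22 p) (int p) = 1"
      using D22 prime_int by (intro Legendre_eq_1_if_cong_square) (auto intro: cong_trans)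
  next
    assume "p mod 8 = 5"
    then show "Legendre (D22 p) (int p) = 0"
      using D22 prod_form_moment_cong_zero cong_trans unfolding Legendre_def by auto
  qed
qed

end
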